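(* Let $b_0>0$. There exists $\delta_6(b_0)>0$ such that for all $\delta\in(0,\delta_6)$ there exists $s_6(\delta,b_0)\ge1$ such that for all $s_0\ge s_6$: if $(q,b)(s)\in V_{\delta,b_0}(s)$ for all $s\in[s_0,\bar s]$, then for all $s\in[s_0,\bar s]$, $$P_{2k}(\mathcal M(q))=\frac p{p-1}+O(I(s)^{-\delta}),\qquad P_n(\mathcal M(q))=O(I(s)^{-\delta})\ \text{ for }n\in\{0,\dots,[M]\},\ n\ne2k,$$ where $\mathcal M(q)=\frac p{p-1}y^{2k}(1+e_bq)$ with $b=b(s)$, and the $O(\cdot)$ constants are independent of $s$ and $s_0$.
   Context: Fix $p>1$ and an integer $k\ge2$. Let $I(s)=e^{\frac s2(1-\frac1k)}$, $M=\frac{2kp}{p-1}$, $[M]$ the largest integer less than $M$, $e_b(y)=(p-1+by^{2k})^{-1}$. Let $\rho_s(y)=\frac{I(s)}{\sqrt{4\pi}}e^{-I(s)^2y^2/4}$, $\langle f,g\rangle_{L^2_{\rho_s}}=\int fg\rho_s\,dy$, $H_m(y,s)=\sum_{\ell=0}^{[m/2]}\frac{m!}{\ell!(m-2\ell)!}(-I(s)^{-2})^\ell y^{m-2\ell}$; $P_m(g)=\langle g,H_m\rangle_{L^2_{\rho_s}}/\langle H_m,H_m\rangle_{L^2_{\rho_s}}$, $q_m=P_m(q)$, $q_-=q-\sum_{m=0}^{[M]}q_mH_m$, $|g|_s=\sup_y\frac{|g(y)|}{I(s)^{-M}+|y|^M}$. The shrinking set $V_{\delta,b_0}(s)$ is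 the set of pairs $(q,b)$ ($q$ with $(1+|y|^M)^{-1}q\in L^\infty$, $b\in\mathbb R$) with $|q_m|\le I(s)^{-\delta}$ for $0\le m\le[M]$, $m\ne2k$; $|q_{2k}|\le I(s)^{-2\delta}$; $|q_-|_s\le I(s)^{-\delta}$; and $\frac{b_0}2\le b\le2b_0$. *)

theory Defs
  imports "HOL-Analysis.Analysis"
begin

definition Ifun :: "nat \<Rightarrow> real \<Rightarrow> real" where
  "Ifun k s = exp (s / 2 * (1 - 1 / real k))"

definition Mexp :: "real \<Rightarrow> nat \<Rightarrow> real" where
  "Mexp p k = 2 * real k * p / (p - 1)"

text \<open>[M]: the largest integer strictly less than M (M > 0 here).\<close>
definition brM :: "real \<Rightarrow> nat \<Rightarrow> nat" where
  "brM p k = nat (\<lceil>Mexp p k\<rceil> - 1)"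

definition e_b :: "real \<Rightarrow> nat \<Rightarrow> real \<Rightarrow> real \<Rightarrow> real" where
  "e_b p k b y = 1 / (p - 1 + b * y ^ (2 * k))"

definition rho :: "nat \<Rightarrow> real \<Rightarrow> real \<Rightarrow> real" where
  "rho k s y = Ifun k s / sqrt (4 * pi) * exp (- (Ifun k s)\<^sup>2 * y\<^sup>2 / 4)"

definition Hm :: "nat \<Rightarrow> nat \<Rightarrow> real \<Rightarrow> real \<Rightarrow> real" where
  "Hm k m y s = (\<Sum>l = 0..m div 2.
      fact m / (fact l * fact (m - 2 * l)) * (- (1 / (Ifun k s)\<^sup>2)) ^ l * y ^ (m - 2 * l))"

definition inner_rho :: "nat \<Rightarrow> real \<Rightarrow> (real \<Rightarrow> real) \<Rightarrow> (real \<Rightarrow> real) \<Rightarrow> real" where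
  "inner_rho k s f g = (LINT y|lborel. f y * g y * rho k s y)"

definition Pm :: "nat \<Rightarrow> real \<Rightarrow> nat \<Rightarrow> (real \<Rightarrow> real) \<Rightarrow> real" where
  "Pm k s m g = inner_rho k s g (\<lambda>y. Hm k m y s) / inner_rho k s (\<lambda>y. Hm k m y s) (\<lambda>y. Hm k m y s)"

definition q_minus :: "real \<Rightarrow> nat \<Rightarrow> real \<Rightarrow> (real \<Rightarrow> real) \<Rightarrow> real \<Rightarrow> real" where
  "q_minus p k s q y = q y - (\<Sum>m = 0..brM p k. Pm k s m q * Hm k m y s)"

definition snorm :: "real \<Rightarrow> nat \<Rightarrow> real \<Rightarrow> (real \<Rightarrow> real) \<Rightarrow> ereal" where
  "snorm p k s g = (SUP y. ereal (\<bar>g y\<bar> / (Ifun k s powr (- Mexp p k) + \<bar>y\<bar> powr Mexp p k)))"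

definition inV :: "real \<Rightarrow> nat \<Rightarrow> real \<Rightarrow> real \<Rightarrow> real \<Rightarrow> (real \<Rightarrow> real) \<Rightarrow> real \<Rightarrow> bool" where
  "inV p k \<delta> b0 s q b \<longleftrightarrow>
     q \<in> borel_measurable borel \<and>
     (\<exists>B. \<forall>y. \<bar>q y\<bar> \<le> B * (1 + \<bar>y\<bar> powr Mexp p k)) \<and>
     (\<forall>m \<le> brM p k. m \<noteq> 2 * k \<longrightarrow> \<bar>Pm k s m q\<bar> \<le> Ifun k s powr (- \<delta>)) \<and>
     \<bar>Pm k s (2 * k) q\<bar> \<le> Ifun k s powr (- 2 * \<delta>) \<and>
     snorm p k s (q_minus p k s q) \<le> ereal (Ifun k s powr (- \<delta>)) \<and>
     b0 / 2 \<le> b \<and> b \<le> 2 * b0"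

definition Mq :: "real \<Rightarrow> nat \<Rightarrow> real \<Rightarrow> (real \<Rightarrow> real) \<Rightarrow> real \<Rightarrow> real" where
  "Mq p k b q y = p / (p - 1) * y ^ (2 * k) * (1 + e_b p k b y * q y)"

end

theory Submission
  imports Defs "HOL-Probability.Distributions"
begin

(* Write M(q) = p/(p-1) (y^(2k) + E q) with E = y^(2k) e_b and split q = \<Sum>_{m \<le> [M]} q_m H_m + q_-.
   The weight \<rho>_s is a centred Gaussian and the H_n are its Hermite polynomials, so projections of
   monomials are exact Gaussian moments: P_n(y^d) is 0 for d < n, 1 for d = n, and O(I^(n-d))
   for d > n; hence P_n(y^(2k)) = [n = 2k] + O(I^-1).  The other two terms are O(I^-\<delta>):
   the coefficients q_m are O(I^-\<delta>) while P_n(E H_m) = O(1) uniformly in s and b, and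
   |E q_-| \<le> (2/b0) I^-\<delta> (I^-M + |y|^M) projects to O(I^-\<delta> I^(n-M)) with n < M. *)

section \<open>The Gaussian weight and its moments\<close>

definition gauss :: "real \<Rightarrow> real \<Rightarrow> real" where
  "gauss I y = normal_density 0 (sqrt 2 / I) y"

lemma Ifun_pos: "Ifun k s > 0"
  unfolding Ifun_def by simp

lemma Ifun_ge_1: "k \<ge> 1 \<Longrightarrow> s \<ge> 0 \<Longrightarrow> Ifun k s \<ge> 1"
  unfolding Ifun_def by (simp add: divide_simps)

lemma rho_eq_gauss: "rho k s y = gauss (Ifun k s) y"
proof -
  define I where "I = Ifun k s"
  have I: "I > 0" unfolding I_def by (rule Ifun_pos)
  have "2 * pi * (sqrt 2 / I)\<^sup>2 = 4 * pi / I\<^sup>2"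
    using I by (simp add: power_divide)
  moreover have "sqrt (4 * pi / I\<^sup>2) = sqrt (4 * pi) / I"
    using I by (simp add: real_sqrt_divide)
  moreover have "- (y - 0)\<^sup>2 / (2 * (sqrt 2 / I)\<^sup>2) = - I\<^sup>2 * y\<^sup>2 / 4"
    using I by (simp add: power_divide field_simps)
  ultimately show ?thesis
    unfolding rho_def gauss_def normal_density_def I_def[symmetric] by (simp add: field_simps)
qed

lemma gauss_nonneg: "gauss I y \<ge> 0"
  unfolding gauss_def by simp

lemma gauss_measurable [measurable]: "gauss I \<in> borel_measurable borel"
  unfolding gauss_def by measurable

definition gauss_moment :: "real \<Rightarrow> nat \<Rightarrow> real" where
  "gauss_moment I j = (LINT y|lborel. gauss I y * y ^ j)"

lemma integrable_gauss_monomial: "I > 0 \<Longrightarrow> integrable lborel (\<lambda>y. gauss I y * y ^ j)"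
  unfolding gauss_def using integrable_normal_moment[of "sqrt 2 / I" 0 j] by simp

lemma gauss_moment_even:
  assumes "I > 0" shows "gauss_moment I (2 * i) = fact (2 * i) / (I ^ (2 * i) * fact i)"
proof -
  have "gauss_moment I (2 * i) = fact (2 * i) / ((2 / (sqrt 2 / I)\<^sup>2) ^ i * fact i)"
    unfolding gauss_moment_def gauss_def
    using integral_normal_moment_even[where \<sigma>="sqrt 2 / I" and k=i and \<mu>=0] assms by simp
  also have "(2 / (sqrt 2 / I)\<^sup>2) ^ i = I ^ (2 * i)"
    using assms by (simp add: power_divide power_mult)
  finally show ?thesis .
qed

lemma gauss_moment_odd: "I > 0 \<Longrightarrow> gauss_moment I (2 * i + 1) = 0"
  unfolding gauss_moment_def gauss_def
  using integral_normal_moment_odd[where \<sigma>="sqrt 2 / I" and k=i and \<mu>=0] by simp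

lemma gauss_moment_0: "I > 0 \<Longrightarrow> gauss_moment I 0 = 1"
  using gauss_moment_even[of I 0] by simp

lemma gauss_moment_Suc:
  assumes "I > 0" shows "gauss_moment I (Suc j) = 2 / I\<^sup>2 * real j * gauss_moment I (j - 1)"
proof (cases "even j")
  case True
  then obtain i where "j = 2 * i" by (auto elim: evenE)
  then show ?thesis
    using gauss_moment_odd[OF assms, of i] gauss_moment_odd[OF assms, of "i - 1"] by (cases i) auto
next
  case False
  then obtain i where j: "j = 2 * i + 1" by (auto elim: oddE)
  have "fact (2 * (i + 1)) / (I ^ (2 * (i + 1)) * fact (i + 1))
      = (2 * real i + 2) * (2 * real i + 1) * fact (2 * i) / (I\<^sup>2 * I ^ (2 * i) * ((real i + 1) * fact i))"
    by (simp add: algebra_simps power_add power2_eq_square)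
  also have "\<dots> = 2 / I\<^sup>2 * (2 * real i + 1) * (fact (2 * i) / (I ^ (2 * i) * fact i))"
    using assms by (simp add: divide_simps) (simp add: algebra_simps)
  finally show ?thesis
    using gauss_moment_even[OF assms, of "i + 1"] gauss_moment_even[OF assms, of i] j by simp
qed

section \<open>Hermite polynomials\<close>

definition hermite_coeff :: "nat \<Rightarrow> nat \<Rightarrow> real" where
  "hermite_coeff n l = (if 2 * l \<le> n then fact n / (fact l * fact (n - 2 * l)) else 0)"

definition hermite :: "real \<Rightarrow> nat \<Rightarrow> real \<Rightarrow> real" where
  "hermite I n y = (\<Sum>l = 0..n div 2. hermite_coeff n l * (- (1 / I\<^sup>2)) ^ l * y ^ (n - 2 * l))"

lemma hermite_measurable [measurable]: "hermite I n \<in> borel_measurable borel"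
  unfolding hermite_def by measurable

lemma Hm_eq_hermite: "Hm k n y s = hermite (Ifun k s) n y"
  unfolding Hm_def hermite_def hermite_coeff_def by (intro sum.cong) auto

lemma hermite_coeff_nonneg: "hermite_coeff n l \<ge> 0"
  unfolding hermite_coeff_def by simp

lemma hermite_eq_sum_upto:
  assumes "n div 2 \<le> N"
  shows "hermite I n y = (\<Sum>l = 0..N. hermite_coeff n l * (- (1 / I\<^sup>2)) ^ l * y ^ (n - 2 * l))"
  unfolding hermite_def
  by (rule sum.mono_neutral_left) (use assms in \<open>auto simp: hermite_coeff_def\<close>)

lemma hermite_coeff_Suc_Suc:
  "hermite_coeff (n + 2) (Suc l) = hermite_coeff (n + 1) (Suc l) + 2 * real (n + 1) * hermite_coeff n l"
proof (cases "2 * l \<le> n")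
  case False
  then show ?thesis by (simp add: hermite_coeff_def)
next
  case True
  then obtain d where n: "n = 2 * l + d" using le_Suc_ex by blast
  show ?thesis
  proof (cases d)
    case 0
    have "fact (2 * l + 2) / fact (Suc l) = (2 * real l + 2) * (2 * real l + 1) * fact (2 * l) / ((real l + 1) * fact l)"
      by (simp add: algebra_simps)
    also have "\<dots> = 2 * (2 * real l + 1) * (fact (2 * l) / fact l)"
      by (simp add: divide_simps) (simp add: algebra_simps)
    finally show ?thesis using 0 n by (simp add: hermite_coeff_def algebra_simps)
  next
    case (Suc e)
    have "fact (2 * l + e + 3) = (2 * real l + e + 3) * (2 * real l + e + 2) * (fact (2 * l + e + 1) :: real)"
      by (simp add: numeral_3_eq_3 algebra_simps)
    moreover have "fact (2 * l + e + 2) = (2 * real l + e + 2) * (fact (2 * l + e + 1) :: real)"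
      by (simp add: algebra_simps)
    moreover have "fact (Suc l) = (real l + 1) * (fact l :: real)" "fact (Suc e) = (real e + 1) * (fact e :: real)"
      by simp_all
    ultimately show ?thesis
      unfolding hermite_coeff_def using n Suc
      by (simp add: numeral_3_eq_3 divide_simps) (simp add: algebra_simps)
  qed
qed

lemma hermite_coeff_times_degree:
  "hermite_coeff n l * real (n - 2 * l) = real n * hermite_coeff (n - 1) l"
proof (cases "2 * l < n")
  case True
  then obtain d where n: "n = 2 * l + Suc d" using True by (intro that[of "n - 2 * l - 1"]) simp
  have lhs: "hermite_coeff n l = fact (2 * l + Suc d) / (fact l * fact (Suc d))"
    and rhs: "hermite_coeff (n - 1) l = fact (2 * l + d) / (fact l * fact d)"
    unfolding hermite_coeff_def n by simp_all
  have f1: "fact (2 * l + Suc d) = (2 * real l + real d + 1) * (fact (2 * l + d) :: real)"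
    by (simp add: algebra_simps)
  have f2: "fact (Suc d) = (real d + 1) * (fact d :: real)"
    by simp
  have "fact l \<noteq> (0::real)" "fact d \<noteq> (0::real)" "real d + 1 \<noteq> 0"
    by simp_all
  then show ?thesis
    unfolding lhs rhs f1 f2 using n by (simp add: divide_simps) (simp add: algebra_simps)
next
  case False
  then show ?thesis by (cases n) (simp_all add: hermite_coeff_def)
qed
lemma hermite_Suc_Suc:
  "hermite I (n + 2) y = y * hermite I (n + 1) y - 2 / I\<^sup>2 * real (n + 1) * hermite I n y"
proof -
  let ?a = "- (1 / I\<^sup>2)"
  define G where "G l = (if l = 0 then 0 else 2 * real (n + 1) * hermite_coeff n (l - 1) * ?a ^ l * y ^ (n + 2 - 2 * l))" for l
  have summand: "hermite_coeff (n + 2) l * ?a ^ l * y ^ (n + 2 - 2 * l)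
      = hermite_coeff (n + 1) l * ?a ^ l * (y * y ^ (n + 1 - 2 * l)) + G l" for l
  proof (cases l)
    case (Suc j)
    have "y * y ^ (n + 1 - 2 * l) = y ^ (n + 2 - 2 * l) \<or> hermite_coeff (n + 1) l = 0"
    proof (cases "2 * l \<le> n + 1")
      case True
      then have "n + 2 - 2 * l = Suc (n + 1 - 2 * l)" by simp
      then show ?thesis by simp
    qed (simp add: hermite_coeff_def)
    then show ?thesis
      using hermite_coeff_Suc_Suc[of n j] Suc by (auto simp: G_def algebra_simps)
  qed (simp add: hermite_coeff_def G_def)
  have upper: "hermite I (n + 1) y = (\<Sum>l = 0..n + 2. hermite_coeff (n + 1) l * ?a ^ l * y ^ (n + 1 - 2 * l))"
    by (rule hermite_eq_sum_upto) simp
  have shifted: "y * hermite I (n + 1) y = (\<Sum>l = 0..n + 2. hermite_coeff (n + 1) l * ?a ^ l * (y * y ^ (n + 1 - 2 * l)))"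
    unfolding upper sum_distrib_left by (rule sum.cong) (simp_all add: mult_ac)
  have "(\<Sum>l = 0..n + 2. G l) = (\<Sum>l = 0..n + 1. G (Suc l))"
    using sum.atLeast0_atMost_Suc_shift[of G "n + 1"] by (simp add: G_def)
  also have "\<dots> = 2 * ?a * real (n + 1) * (\<Sum>l = 0..n + 1. hermite_coeff n l * ?a ^ l * y ^ (n - 2 * l))"
    unfolding sum_distrib_left by (simp add: G_def mult_ac)
  also have "(\<Sum>l = 0..n + 1. hermite_coeff n l * ?a ^ l * y ^ (n - 2 * l)) = hermite I n y"
    by (rule hermite_eq_sum_upto[symmetric]) simp
  finally have lower: "(\<Sum>l = 0..n + 2. G l) = 2 * ?a * real (n + 1) * hermite I n y" .
  have "hermite I (n + 2) y = (\<Sum>l = 0..n + 2. hermite_coeff (n + 2) l * ?a ^ l * y ^ (n + 2 - 2 * l))"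
    by (rule hermite_eq_sum_upto) simp
  also have "\<dots> = y * hermite I (n + 1) y + (\<Sum>l = 0..n + 2. G l)"
    unfolding summand sum.distrib shifted ..
  finally show ?thesis unfolding lower by simp
qed

definition hermite_moment :: "real \<Rightarrow> nat \<Rightarrow> nat \<Rightarrow> real" where
  "hermite_moment I n e = (LINT y|lborel. gauss I y * (y ^ e * hermite I n y))"

lemma gauss_monomial_hermite_eq_sum:
  assumes "n div 2 \<le> N"
  shows "gauss I y * (y ^ e * hermite I n y)
    = (\<Sum>l = 0..N. hermite_coeff n l * (- (1 / I\<^sup>2)) ^ l * (gauss I y * y ^ (n - 2 * l + e)))"
  unfolding hermite_eq_sum_upto[OF assms] sum_distrib_left
  by (rule sum.cong) (simp_all add: power_add mult_ac)

lemma integrable_gauss_monomial_hermite: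
  "I > 0 \<Longrightarrow> integrable lborel (\<lambda>y. gauss I y * (y ^ e * hermite I n y))"
  unfolding gauss_monomial_hermite_eq_sum[OF order_refl]
  by (intro Bochner_Integration.integrable_sum integrable_mult_right integrable_gauss_monomial)

lemma hermite_moment_eq_sum:
  assumes "I > 0" "n div 2 \<le> N"
  shows "hermite_moment I n e = (\<Sum>l = 0..N. hermite_coeff n l * (- (1 / I\<^sup>2)) ^ l * gauss_moment I (n - 2 * l + e))"
  unfolding hermite_moment_def gauss_monomial_hermite_eq_sum[OF assms(2)] gauss_moment_def
  by (intro Bochner_Integration.integral_sum[THEN trans] integrable_mult_right integrable_gauss_monomial assms(1))
    simp

lemma hermite_moment_0: "I > 0 \<Longrightarrow> hermite_moment I 0 e = gauss_moment I e"
  using hermite_moment_eq_sum[of I 0 0 e] by (simp add: hermite_coeff_def)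

(* Gaussian integration by parts, \<integral> y^(e+1) H_n d\<gamma> = (2/I\<^sup>2) \<integral> (y^e H_n)' d\<gamma> with H_n' = n H_(n-1),
   carried out on the moments. *)
lemma hermite_moment_Suc_right:
  assumes I: "I > 0"
  shows "hermite_moment I n (Suc e) = 2 / I\<^sup>2 * (real n * hermite_moment I (n - 1) e + real e * hermite_moment I n (e - 1))"
proof -
  let ?a = "- (1 / I\<^sup>2)"
  let ?m = "\<lambda>l. gauss_moment I (n - 2 * l + e - 1)"
  have n: "n div 2 \<le> n" and n1: "(n - 1) div 2 \<le> n" by simp_all
  have "hermite_moment I n (Suc e) = (\<Sum>l = 0..n. hermite_coeff n l * ?a ^ l * (2 / I\<^sup>2 * real (n - 2 * l + e) * ?m l))"
    unfolding hermite_moment_eq_sum[OF I n] using gauss_moment_Suc[OF I] by (intro sum.cong) simp_all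
  also have "\<dots> = 2 / I\<^sup>2 * ((\<Sum>l = 0..n. real n * (hermite_coeff (n - 1) l * ?a ^ l * ?m l))
                  + real e * (\<Sum>l = 0..n. hermite_coeff n l * ?a ^ l * ?m l))"
  proof -
    have pt: "hermite_coeff n l * ?a ^ l * (2 / I\<^sup>2 * real (n - 2 * l + e) * ?m l)
        = 2 / I\<^sup>2 * (real n * (hermite_coeff (n - 1) l * ?a ^ l * ?m l) + real e * (hermite_coeff n l * ?a ^ l * ?m l))" for l
    proof -
      have "hermite_coeff n l * ?a ^ l * (2 / I\<^sup>2 * real (n - 2 * l + e) * ?m l)
          = 2 / I\<^sup>2 * ((hermite_coeff n l * real (n - 2 * l)) * ?a ^ l * ?m l + real e * (hermite_coeff n l * ?a ^ l * ?m l))"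
        by (simp add: algebra_simps)
      then show ?thesis by (simp only: hermite_coeff_times_degree mult.assoc)
    qed
    show ?thesis by (simp only: pt distrib_left sum.distrib sum_distrib_left)
  qed
  also have "(\<Sum>l = 0..n. real n * (hermite_coeff (n - 1) l * ?a ^ l * ?m l)) = real n * hermite_moment I (n - 1) e"
    unfolding hermite_moment_eq_sum[OF I n1] sum_distrib_left
    by (intro sum.cong) (auto simp: hermite_coeff_def Suc_diff_le)
  also have "real e * (\<Sum>l = 0..n. hermite_coeff n l * ?a ^ l * ?m l) = real e * hermite_moment I n (e - 1)"
    unfolding hermite_moment_eq_sum[OF I n] by (cases e) simp_all
  finally show ?thesis .
qed

lemma hermite_moment_Suc_Suc:
  assumes "I > 0"
  shows "hermite_moment I (n + 2) e = hermite_moment I (n + 1) (Suc e) - 2 / I\<^sup>2 * real (n + 1) * hermite_moment I n e"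
proof -
  have "hermite_moment I (n + 2) e = (LINT y|lborel. gauss I y * (y ^ Suc e * hermite I (n + 1) y)
      - 2 / I\<^sup>2 * real (n + 1) * (gauss I y * (y ^ e * hermite I n y)))"
    unfolding hermite_moment_def hermite_Suc_Suc by (rule Bochner_Integration.integral_cong) (simp_all add: algebra_simps)
  also have "\<dots> = hermite_moment I (n + 1) (Suc e) - 2 / I\<^sup>2 * real (n + 1) * hermite_moment I n e"
    unfolding hermite_moment_def
    using integrable_gauss_monomial_hermite[OF assms, of "Suc e" "n + 1"] integrable_gauss_monomial_hermite[OF assms, of e n]
    by (subst Bochner_Integration.integral_diff) simp_all
  finally show ?thesis .
qed

lemma hermite_moment_Suc_left:
  assumes I: "I > 0"
  shows "hermite_moment I (Suc n) e = 2 / I\<^sup>2 * real e * hermite_moment I n (e - 1)"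
proof (cases n)
  case 0
  then show ?thesis
    using hermite_moment_eq_sum[OF I, of 1 0 e] hermite_moment_0[OF I] gauss_moment_Suc[OF I, of e]
    by (simp add: hermite_coeff_def)
next
  case (Suc m)
  then show ?thesis
    using hermite_moment_Suc_Suc[OF I, of m e] hermite_moment_Suc_right[OF I, of "m + 1" e] I
    by (simp add: field_simps)
qed

lemma hermite_moment_below: "I > 0 \<Longrightarrow> e < n \<Longrightarrow> hermite_moment I n e = 0"
proof (induction n arbitrary: e)
  case (Suc n)
  then show ?case by (cases e) (simp_all add: hermite_moment_Suc_left)
qed simp

lemma hermite_moment_diag: "I > 0 \<Longrightarrow> hermite_moment I n n = (2 / I\<^sup>2) ^ n * fact n"
  by (induction n) (simp_all add: hermite_moment_Suc_left hermite_moment_0 gauss_moment_0 algebra_simps)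

lemma inner_rho_eq_integral_gauss:
  "inner_rho k s f g = (LINT y|lborel. (f y * g y) * gauss (Ifun k s) y)"
  unfolding inner_rho_def rho_eq_gauss ..

lemma inner_rho_monomial_Hm:
  "inner_rho k s (\<lambda>y. y ^ e) (\<lambda>y. Hm k n y s) = hermite_moment (Ifun k s) n e"
  unfolding inner_rho_eq_integral_gauss hermite_moment_def Hm_eq_hermite by (simp add: mult_ac)

lemma inner_rho_Hm_Hm:
  "inner_rho k s (\<lambda>y. Hm k n y s) (\<lambda>y. Hm k n y s) = (2 / (Ifun k s)\<^sup>2) ^ n * fact n"
proof -
  define I where "I = Ifun k s"
  have I: "I > 0" unfolding I_def by (rule Ifun_pos)
  let ?c = "\<lambda>l. hermite_coeff n l * (- (1 / I\<^sup>2)) ^ l"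
  have "inner_rho k s (\<lambda>y. Hm k n y s) (\<lambda>y. Hm k n y s)
      = (LINT y|lborel. (\<Sum>l = 0..n div 2. ?c l * (gauss I y * (y ^ (n - 2 * l) * hermite I n y))))"
    unfolding inner_rho_eq_integral_gauss Hm_eq_hermite I_def[symmetric]
    by (rule Bochner_Integration.integral_cong)
      (simp_all add: hermite_def[of _ n] sum_distrib_right sum_distrib_left mult_ac)
  also have "\<dots> = (\<Sum>l = 0..n div 2. ?c l * hermite_moment I n (n - 2 * l))"
    unfolding hermite_moment_def
    by (intro Bochner_Integration.integral_sum[THEN trans] integrable_mult_right integrable_gauss_monomial_hermite I)
      simp
  also have "\<dots> = (\<Sum>l \<in> {0}. ?c l * hermite_moment I n (n - 2 * l))"
  proof (rule sum.mono_neutral_right)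
    show "\<forall>l \<in> {0..n div 2} - {0}. ?c l * hermite_moment I n (n - 2 * l) = 0"
      by (auto intro!: hermite_moment_below[OF I])
  qed auto
  finally show ?thesis
    using hermite_moment_diag[OF I] by (simp add: I_def hermite_coeff_def)
qed

lemma Pm_monomial:
  "Pm k s n (\<lambda>y. y ^ e) = hermite_moment (Ifun k s) n e / ((2 / (Ifun k s)\<^sup>2) ^ n * fact n)"
  unfolding Pm_def inner_rho_monomial_Hm inner_rho_Hm_Hm ..

lemma Pm_monomial_below: "e < n \<Longrightarrow> Pm k s n (\<lambda>y. y ^ e) = 0"
  unfolding Pm_monomial using hermite_moment_below[OF Ifun_pos] by simp

lemma Pm_monomial_self: "Pm k s n (\<lambda>y. y ^ n) = 1"
  unfolding Pm_monomial using hermite_moment_diag[OF Ifun_pos, of k s n] Ifun_pos[of k s] by simp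

section \<open>Polynomially bounded functions\<close>

definition gauss_poly_integral :: "nat \<Rightarrow> real" where
  "gauss_poly_integral L = (\<Sum>i\<le>L. real (L choose i) * (fact (2 * i) / fact i))"

lemma one_plus_square_power_gauss_eq_sum:
  "(1 + (I * y)\<^sup>2) ^ L * gauss I y = (\<Sum>i\<le>L. real (L choose i) * I ^ (2 * i) * (gauss I y * y ^ (2 * i)))"
proof -
  have "(1 + (I * y)\<^sup>2) ^ L = (\<Sum>i\<le>L. real (L choose i) * ((I * y)\<^sup>2) ^ i)"
    using binomial_ring[of "(I * y)\<^sup>2" 1 L] by (simp add: add.commute)
  then show ?thesis
    by (simp add: sum_distrib_left power_mult_distrib power_mult[symmetric] mult_ac)
qed

lemma integrable_one_plus_square_power_gauss:
  "I > 0 \<Longrightarrow> integrable lborel (\<lambda>y. (1 + (I * y)\<^sup>2) ^ L * gauss I y)"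
  unfolding one_plus_square_power_gauss_eq_sum
  by (intro Bochner_Integration.integrable_sum integrable_mult_right integrable_gauss_monomial)

lemma integral_one_plus_square_power_gauss:
  assumes "I > 0"
  shows "(LINT y|lborel. (1 + (I * y)\<^sup>2) ^ L * gauss I y) = gauss_poly_integral L"
  unfolding one_plus_square_power_gauss_eq_sum gauss_poly_integral_def
  by (intro Bochner_Integration.integral_sum[THEN trans] integrable_mult_right integrable_gauss_monomial assms sum.cong)
    (use gauss_moment_even[OF assms] assms in \<open>simp_all add: gauss_moment_def[symmetric]\<close>)

lemma gauss_poly_integral_nonneg: "gauss_poly_integral L \<ge> 0"
  unfolding gauss_poly_integral_def by (intro sum_nonneg) simp

lemma abs_power_le_one_plus_square_power:
  assumes "j \<le> n" shows "\<bar>u :: real\<bar> ^ j \<le> (1 + u\<^sup>2) ^ n"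
proof -
  have "0 \<le> (\<bar>u\<bar> - 1 / 2)\<^sup>2" by simp
  also have "(\<bar>u\<bar> - 1 / 2)\<^sup>2 = u\<^sup>2 - \<bar>u\<bar> + 1 / 4"
    by (simp add: power2_diff algebra_simps power2_eq_square)
  finally have "\<bar>u\<bar> \<le> 1 + u\<^sup>2" by linarith
  then have "\<bar>u\<bar> ^ j \<le> (1 + u\<^sup>2) ^ j" by (intro power_mono) simp_all
  also have "\<dots> \<le> (1 + u\<^sup>2) ^ n" using assms by (intro power_increasing) simp_all
  finally show ?thesis .
qed

lemma abs_power_le_scaled:
  fixes I y :: real
  assumes "I > 0" "j \<le> n" shows "\<bar>y\<bar> ^ j \<le> (1 + (I * y)\<^sup>2) ^ n / I ^ j"
proof -
  have "\<bar>I * y\<bar> ^ j = I ^ j * \<bar>y\<bar> ^ j"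
    by (simp add: abs_mult power_mult_distrib abs_of_pos[OF assms(1)])
  then have "\<bar>y\<bar> ^ j = \<bar>I * y\<bar> ^ j / I ^ j"
    using assms(1) by simp
  also have "\<dots> \<le> (1 + (I * y)\<^sup>2) ^ n / I ^ j"
    using assms by (intro divide_right_mono abs_power_le_one_plus_square_power) simp_all
  finally show ?thesis .
qed

definition hermite_coeff_sum :: "nat \<Rightarrow> real" where
  "hermite_coeff_sum n = (\<Sum>l = 0..n div 2. hermite_coeff n l)"

lemma hermite_coeff_sum_nonneg: "hermite_coeff_sum n \<ge> 0"
  unfolding hermite_coeff_sum_def by (intro sum_nonneg hermite_coeff_nonneg)

lemma abs_hermite_le:
  assumes I: "I > 0"
  shows "\<bar>hermite I n y\<bar> \<le> hermite_coeff_sum n * (1 + (I * y)\<^sup>2) ^ n / I ^ n"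
proof -
  have "\<bar>hermite I n y\<bar> \<le> (\<Sum>l = 0..n div 2. \<bar>hermite_coeff n l * (- (1 / I\<^sup>2)) ^ l * y ^ (n - 2 * l)\<bar>)"
    unfolding hermite_def by (rule sum_abs)
  also have "\<dots> \<le> (\<Sum>l = 0..n div 2. hermite_coeff n l * ((1 + (I * y)\<^sup>2) ^ n / I ^ n))"
  proof (rule sum_mono)
    fix l assume "l \<in> {0..n div 2}"
    then have l: "2 * l + (n - 2 * l) = n" by auto
    have "\<bar>(- (1 / I\<^sup>2)) ^ l\<bar> = 1 / I ^ (2 * l)"
      by (simp add: power_abs power_mult power_one_over)
    then have "\<bar>(- (1 / I\<^sup>2)) ^ l * y ^ (n - 2 * l)\<bar> = \<bar>y\<bar> ^ (n - 2 * l) / I ^ (2 * l)"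
      by (simp add: abs_mult power_abs)
    also have "\<dots> \<le> (1 + (I * y)\<^sup>2) ^ n / I ^ (n - 2 * l) / I ^ (2 * l)"
      using I by (intro divide_right_mono abs_power_le_scaled) simp_all
    also have "\<dots> = (1 + (I * y)\<^sup>2) ^ n / I ^ n"
    proof -
      have "I ^ (n - 2 * l) * I ^ (2 * l) = I ^ n"
        by (metis l power_add add.commute)
      then show ?thesis by (simp add: divide_divide_eq_left)
    qed
    finally show "\<bar>hermite_coeff n l * (- (1 / I\<^sup>2)) ^ l * y ^ (n - 2 * l)\<bar> \<le> hermite_coeff n l * ((1 + (I * y)\<^sup>2) ^ n / I ^ n)"
      unfolding mult.assoc abs_mult[of "hermite_coeff n l"] abs_of_nonneg[OF hermite_coeff_nonneg]
      by (intro mult_left_mono hermite_coeff_nonneg)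
  qed
  also have "\<dots> = hermite_coeff_sum n * (1 + (I * y)\<^sup>2) ^ n / I ^ n"
    unfolding hermite_coeff_sum_def sum_distrib_right by (simp add: sum_divide_distrib)
  finally show ?thesis .
qed

definition poly_bounded :: "real \<Rightarrow> (real \<Rightarrow> real) \<Rightarrow> bool" where
  "poly_bounded I f \<longleftrightarrow> f \<in> borel_measurable borel \<and> (\<exists>B N. \<forall>y. \<bar>f y\<bar> \<le> B * (1 + (I * y)\<^sup>2) ^ N)"

lemma poly_bounded_add:
  assumes "poly_bounded I f" "poly_bounded I g" shows "poly_bounded I (\<lambda>y. f y + g y)"
proof -
  obtain B1 N1 where f: "\<And>y. \<bar>f y\<bar> \<le> B1 * (1 + (I * y)\<^sup>2) ^ N1"
    using assms(1) unfolding poly_bounded_def by blast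
  obtain B2 N2 where g: "\<And>y. \<bar>g y\<bar> \<le> B2 * (1 + (I * y)\<^sup>2) ^ N2"
    using assms(2) unfolding poly_bounded_def by blast
  have B1: "B1 \<ge> 0" and B2: "B2 \<ge> 0"
    using f[of 0] g[of 0] abs_ge_zero[of "f 0"] abs_ge_zero[of "g 0"] by simp_all
  have "\<bar>f y + g y\<bar> \<le> (B1 + B2) * (1 + (I * y)\<^sup>2) ^ (N1 + N2)" for y
  proof -
    have mono: "(1 + (I * y)\<^sup>2) ^ N \<le> (1 + (I * y)\<^sup>2) ^ (N1 + N2)" if "N \<le> N1 + N2" for N
      using that by (intro power_increasing) simp_all
    have "\<bar>f y\<bar> \<le> B1 * (1 + (I * y)\<^sup>2) ^ (N1 + N2)"
      by (rule order_trans[OF f mult_left_mono[OF mono B1]]) simp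
    moreover have "\<bar>g y\<bar> \<le> B2 * (1 + (I * y)\<^sup>2) ^ (N1 + N2)"
      by (rule order_trans[OF g mult_left_mono[OF mono B2]]) simp
    ultimately show ?thesis
      using abs_triangle_ineq[of "f y" "g y"] distrib_right[of B1 B2 "(1 + (I * y)\<^sup>2) ^ (N1 + N2)"] by linarith
  qed
  moreover have "f \<in> borel_measurable borel" "g \<in> borel_measurable borel"
    using assms unfolding poly_bounded_def by blast+
  then have "(\<lambda>y. f y + g y) \<in> borel_measurable borel" by (rule borel_measurable_add)
  ultimately show ?thesis unfolding poly_bounded_def by blast
qed

lemma poly_bounded_mult:
  assumes "poly_bounded I f" "poly_bounded I g" shows "poly_bounded I (\<lambda>y. f y * g y)"
proof -
  obtain B1 N1 where f: "\<And>y. \<bar>f y\<bar> \<le> B1 * (1 + (I * y)\<^sup>2) ^ N1"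
    using assms(1) unfolding poly_bounded_def by blast
  obtain B2 N2 where g: "\<And>y. \<bar>g y\<bar> \<le> B2 * (1 + (I * y)\<^sup>2) ^ N2"
    using assms(2) unfolding poly_bounded_def by blast
  have "\<bar>f y * g y\<bar> \<le> (B1 * B2) * (1 + (I * y)\<^sup>2) ^ (N1 + N2)" for y
  proof -
    have "0 \<le> B1 * (1 + (I * y)\<^sup>2) ^ N1"
      using f[of y] abs_ge_zero[of "f y"] by linarith
    then have "\<bar>f y * g y\<bar> \<le> (B1 * (1 + (I * y)\<^sup>2) ^ N1) * (B2 * (1 + (I * y)\<^sup>2) ^ N2)"
      unfolding abs_mult by (intro mult_mono f g abs_ge_zero)
    then show ?thesis by (simp add: power_add mult_ac)
  qed
  moreover have "f \<in> borel_measurable borel" "g \<in> borel_measurable borel"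
    using assms unfolding poly_bounded_def by blast+
  then have "(\<lambda>y. f y * g y) \<in> borel_measurable borel" by (rule borel_measurable_times)
  ultimately show ?thesis unfolding poly_bounded_def by blast
qed


lemma poly_bounded_bounded:
  assumes "f \<in> borel_measurable borel" "\<And>y. \<bar>f y\<bar> \<le> B" shows "poly_bounded I f"
proof -
  have "\<bar>f y\<bar> \<le> B * (1 + (I * y)\<^sup>2) ^ 0" for y using assms(2) by simp
  then show ?thesis unfolding poly_bounded_def using assms(1) by blast
qed

lemma poly_bounded_const: "poly_bounded I (\<lambda>y. c)"
  by (rule poly_bounded_bounded[of _ "\<bar>c\<bar>"]) simp_all

lemma poly_bounded_cmult: "poly_bounded I f \<Longrightarrow> poly_bounded I (\<lambda>y. c * f y)"
  by (rule poly_bounded_mult[OF poly_bounded_const])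

lemma poly_bounded_diff:
  "poly_bounded I f \<Longrightarrow> poly_bounded I g \<Longrightarrow> poly_bounded I (\<lambda>y. f y - g y)"
  using poly_bounded_add[of I f "\<lambda>y. (- 1) * g y"] poly_bounded_cmult[of I g "- 1"] by simp

lemma poly_bounded_sum:
  "finite A \<Longrightarrow> (\<And>i. i \<in> A \<Longrightarrow> poly_bounded I (f i)) \<Longrightarrow> poly_bounded I (\<lambda>y. \<Sum>i\<in>A. f i y)"
proof (induction A rule: finite_induct)
  case empty
  show ?case using poly_bounded_const[of I 0] by simp
next
  case (insert i A)
  then show ?case by (simp add: poly_bounded_add)
qed

lemma poly_bounded_monomial:
  assumes "I > 0" shows "poly_bounded I (\<lambda>y. y ^ e)"
proof -
  have "\<bar>y ^ e\<bar> \<le> 1 / I ^ e * (1 + (I * y)\<^sup>2) ^ e" for y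
    using abs_power_le_scaled[OF assms order_refl, of y e] by (simp add: power_abs)
  moreover have "(\<lambda>y::real. y ^ e) \<in> borel_measurable borel" by (simp add: borel_measurable_power)
  ultimately show ?thesis unfolding poly_bounded_def by blast
qed

lemma poly_bounded_hermite:
  assumes "I > 0" shows "poly_bounded I (hermite I n)"
proof -
  have "\<bar>hermite I n y\<bar> \<le> hermite_coeff_sum n / I ^ n * (1 + (I * y)\<^sup>2) ^ n" for y
    using abs_hermite_le[OF assms, of n y] by simp
  then show ?thesis unfolding poly_bounded_def using hermite_measurable by blast
qed

lemma abs_mult_gauss_le:
  fixes I B x :: real
  assumes "\<bar>x\<bar> \<le> B * (1 + (I * y)\<^sup>2) ^ N"
  shows "\<bar>x * gauss I y\<bar> \<le> B * ((1 + (I * y)\<^sup>2) ^ N * gauss I y)"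
  using mult_right_mono[OF assms gauss_nonneg[of I y]] by (simp add: abs_mult gauss_nonneg mult_ac)

lemma abs_integral_gauss_le:
  fixes I B :: real
  assumes I: "I > 0" and f: "\<And>y. \<bar>f y\<bar> \<le> B * (1 + (I * y)\<^sup>2) ^ N"
  shows "\<bar>LINT y|lborel. f y * gauss I y\<bar> \<le> B * gauss_poly_integral N"
proof -
  have B: "B \<ge> 0"
    using f[of 0] abs_ge_zero[of "f 0"] by simp
  have "\<bar>LINT y|lborel. f y * gauss I y\<bar> \<le> (LINT y|lborel. \<bar>f y * gauss I y\<bar>)"
    by (rule integral_abs_bound)
  also have "\<dots> \<le> (LINT y|lborel. B * ((1 + (I * y)\<^sup>2) ^ N * gauss I y))"
  proof (rule integral_mono')
    show "integrable lborel (\<lambda>y. B * ((1 + (I * y)\<^sup>2) ^ N * gauss I y))"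
      by (intro integrable_mult_right integrable_one_plus_square_power_gauss I)
    show "\<bar>f y * gauss I y\<bar> \<le> B * ((1 + (I * y)\<^sup>2) ^ N * gauss I y)" for y
      by (rule abs_mult_gauss_le[OF f[of y]])
  qed (use B gauss_nonneg in simp)
  also have "\<dots> = B * gauss_poly_integral N"
    using integral_one_plus_square_power_gauss[OF I] by simp
  finally show ?thesis .
qed

lemma integrable_poly_bounded_gauss:
  assumes "poly_bounded I f" "I > 0"
  shows "integrable lborel (\<lambda>y. f y * gauss I y)"
proof -
  obtain B N where f: "\<And>y. \<bar>f y\<bar> \<le> B * (1 + (I * y)\<^sup>2) ^ N" and m: "f \<in> borel_measurable borel"
    using assms(1) unfolding poly_bounded_def by blast
  show ?thesis
  proof (rule Bochner_Integration.integrable_bound)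
    show "integrable lborel (\<lambda>y. B * ((1 + (I * y)\<^sup>2) ^ N * gauss I y))"
      by (intro integrable_mult_right integrable_one_plus_square_power_gauss assms(2))
    show "(\<lambda>y. f y * gauss I y) \<in> borel_measurable lborel"
      using m by measurable
    have "B \<ge> 0"
      using f[of 0] abs_ge_zero[of "f 0"] by simp
    then have "norm (f y * gauss I y) \<le> norm (B * ((1 + (I * y)\<^sup>2) ^ N * gauss I y))" for y
      using abs_mult_gauss_le[OF f[of y]] gauss_nonneg[of I y] by (simp add: abs_mult)
    then show "AE y in lborel. norm (f y * gauss I y) \<le> norm (B * ((1 + (I * y)\<^sup>2) ^ N * gauss I y))"
      by simp
  qed
qed

lemma poly_bounded_Hm: "poly_bounded (Ifun k s) (\<lambda>y. Hm k n y s)"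
  unfolding Hm_eq_hermite by (rule poly_bounded_hermite[OF Ifun_pos])

lemma poly_bounded_monomial_Ifun: "poly_bounded (Ifun k s) (\<lambda>y. y ^ e)"
  by (rule poly_bounded_monomial[OF Ifun_pos])

lemma integrable_Pm_integrand:
  "poly_bounded (Ifun k s) f \<Longrightarrow> integrable lborel (\<lambda>y. (f y * Hm k n y s) * gauss (Ifun k s) y)"
  by (intro integrable_poly_bounded_gauss poly_bounded_mult poly_bounded_Hm Ifun_pos)

lemma Pm_add:
  assumes "poly_bounded (Ifun k s) f" "poly_bounded (Ifun k s) g"
  shows "Pm k s n (\<lambda>y. f y + g y) = Pm k s n f + Pm k s n g"
proof -
  have "inner_rho k s (\<lambda>y. f y + g y) (\<lambda>y. Hm k n y s) = inner_rho k s f (\<lambda>y. Hm k n y s) + inner_rho k s g (\<lambda>y. Hm k n y s)"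
    unfolding inner_rho_eq_integral_gauss distrib_right
    by (intro Bochner_Integration.integral_add integrable_Pm_integrand assms)
  then show ?thesis unfolding Pm_def by (simp add: add_divide_distrib)
qed

lemma Pm_cmult: "Pm k s n (\<lambda>y. c * f y) = c * Pm k s n f"
  unfolding Pm_def inner_rho_def by (simp add: mult.assoc)

lemma Pm_sum:
  assumes "finite A" "\<And>i. i \<in> A \<Longrightarrow> poly_bounded (Ifun k s) (f i)"
  shows "Pm k s n (\<lambda>y. \<Sum>i\<in>A. f i y) = (\<Sum>i\<in>A. Pm k s n (f i))"
proof -
  have "inner_rho k s (\<lambda>y. \<Sum>i\<in>A. f i y) (\<lambda>y. Hm k n y s) = (\<Sum>i\<in>A. inner_rho k s (f i) (\<lambda>y. Hm k n y s))"
    unfolding inner_rho_eq_integral_gauss sum_distrib_right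
    by (intro Bochner_Integration.integral_sum integrable_Pm_integrand assms)
  then show ?thesis unfolding Pm_def by (simp add: sum_divide_distrib)
qed

definition Pm_const :: "nat \<Rightarrow> nat \<Rightarrow> real" where
  "Pm_const n N = hermite_coeff_sum n * gauss_poly_integral (N + n) / (2 ^ n * fact n)"

lemma Pm_const_nonneg: "Pm_const n N \<ge> 0"
  unfolding Pm_const_def using hermite_coeff_sum_nonneg gauss_poly_integral_nonneg by simp

lemma abs_Pm_le:
  assumes f: "\<And>y. \<bar>f y\<bar> \<le> B * (1 + (Ifun k s * y)\<^sup>2) ^ N"
  shows "\<bar>Pm k s n f\<bar> \<le> Pm_const n N * B * Ifun k s ^ n"
proof -
  define I where "I = Ifun k s"
  have I: "I > 0" unfolding I_def by (rule Ifun_pos)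
  have "\<bar>f y * Hm k n y s\<bar> \<le> (B * hermite_coeff_sum n / I ^ n) * (1 + (I * y)\<^sup>2) ^ (N + n)" for y
  proof -
    have "\<bar>f y * Hm k n y s\<bar> \<le> (B * (1 + (I * y)\<^sup>2) ^ N) * (hermite_coeff_sum n * (1 + (I * y)\<^sup>2) ^ n / I ^ n)"
      unfolding abs_mult Hm_eq_hermite I_def[symmetric]
      using f[of y] abs_hermite_le[OF I, of n y] I_def abs_ge_zero[of "f y"]
      by (intro mult_mono) simp_all
    then show ?thesis by (simp add: power_add field_simps)
  qed
  then have num: "\<bar>inner_rho k s f (\<lambda>y. Hm k n y s)\<bar> \<le> B * hermite_coeff_sum n / I ^ n * gauss_poly_integral (N + n)"
    unfolding inner_rho_eq_integral_gauss I_def[symmetric] by (rule abs_integral_gauss_le[OF I])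
  define D where "D = inner_rho k s (\<lambda>y. Hm k n y s) (\<lambda>y. Hm k n y s)"
  have D_eq: "D = 2 ^ n * fact n / (I ^ n * I ^ n)"
    unfolding D_def inner_rho_Hm_Hm I_def[symmetric] by (simp add: power_divide power_mult power2_eq_square power_mult_distrib)
  have D: "D > 0"
    unfolding D_eq using I by simp
  have "\<bar>Pm k s n f\<bar> = \<bar>inner_rho k s f (\<lambda>y. Hm k n y s)\<bar> / D"
    unfolding Pm_def D_def[symmetric] using D by (simp add: abs_divide)
  also have "\<dots> \<le> B * hermite_coeff_sum n / I ^ n * gauss_poly_integral (N + n) / D"
    using D by (intro divide_right_mono[OF num]) simp
  also have "\<dots> = Pm_const n N * B * I ^ n"
    unfolding Pm_const_def D_eq using I by (simp add: field_simps)
  finally show ?thesis unfolding I_def .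
qed

(* A factor |y|^d, which is small on the scale 1/I of the weight, gains I^-d. *)
lemma abs_Pm_le_vanishing:
  assumes B: "B \<ge> 0" and f: "\<And>y. \<bar>f y\<bar> \<le> B * \<bar>y\<bar> ^ d * (1 + (Ifun k s * y)\<^sup>2) ^ N"
  shows "\<bar>Pm k s n f\<bar> \<le> Pm_const n (N + d) * B * Ifun k s ^ n / Ifun k s ^ d"
proof -
  define I where "I = Ifun k s"
  have I: "I > 0" unfolding I_def by (rule Ifun_pos)
  have "\<bar>f y\<bar> \<le> (B / I ^ d) * (1 + (I * y)\<^sup>2) ^ (N + d)" for y
  proof -
    have "B * \<bar>y\<bar> ^ d \<le> B * ((1 + (I * y)\<^sup>2) ^ d / I ^ d)"
      by (rule mult_left_mono[OF abs_power_le_scaled[OF I order_refl] B])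
    then have "B * \<bar>y\<bar> ^ d * (1 + (I * y)\<^sup>2) ^ N \<le> B * ((1 + (I * y)\<^sup>2) ^ d / I ^ d) * (1 + (I * y)\<^sup>2) ^ N"
      by (rule mult_right_mono) simp
    then have "\<bar>f y\<bar> \<le> B * ((1 + (I * y)\<^sup>2) ^ d / I ^ d) * (1 + (I * y)\<^sup>2) ^ N"
      using f[of y] unfolding I_def by linarith
    then show ?thesis by (simp add: power_add field_simps)
  qed
  then have "\<bar>Pm k s n f\<bar> \<le> Pm_const n (N + d) * (B / I ^ d) * I ^ n"
    unfolding I_def by (rule abs_Pm_le)
  then show ?thesis unfolding I_def by simp
qed

lemma mult_divide_le_self:
  fixes A x y :: real
  assumes "0 \<le> A" "x \<le> y" "0 < y"
  shows "A * x / y \<le> A"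
  using mult_left_mono[OF assms(2,1)] assms(3) by (simp add: divide_le_eq)

lemma abs_Pm_monomial_le:
  assumes I: "Ifun k s \<ge> 1"
  shows "\<bar>Pm k s n (\<lambda>y. y ^ e)\<bar> \<le> Pm_const n e"
proof (cases "e < n")
  case True
  then show ?thesis using Pm_monomial_below Pm_const_nonneg by simp
next
  case False
  have "\<bar>Pm k s n (\<lambda>y. y ^ e)\<bar> \<le> Pm_const n (0 + e) * 1 * Ifun k s ^ n / Ifun k s ^ e"
    by (rule abs_Pm_le_vanishing) (simp_all add: power_abs)
  also have "\<dots> \<le> Pm_const n (0 + e) * 1"
    using False I Pm_const_nonneg[of n e] by (intro mult_divide_le_self power_increasing) simp_all
  finally show ?thesis by simp
qed

lemma abs_Pm_monomial_sub_le:
  assumes I: "Ifun k s \<ge> 1" and "\<delta> \<le> 1"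
  shows "\<bar>Pm k s n (\<lambda>y. y ^ d) - (if n = d then 1 else 0)\<bar> \<le> Pm_const n d * Ifun k s powr (- \<delta>)"
proof -
  define I where "I = Ifun k s"
  have I0: "I > 0" and I1: "I \<ge> 1" using I unfolding I_def by simp_all
  consider "n = d" | "d < n" | "n < d" by linarith
  then show ?thesis
  proof cases
    case 1
    then show ?thesis using Pm_monomial_self Pm_const_nonneg by simp
  next
    case 2
    then show ?thesis using Pm_monomial_below Pm_const_nonneg by simp
  next
    case 3
    have "\<bar>Pm k s n (\<lambda>y. y ^ d)\<bar> \<le> Pm_const n (0 + d) * 1 * I ^ n / I ^ d"
      unfolding I_def by (rule abs_Pm_le_vanishing) (simp_all add: power_abs)
    also have "\<dots> \<le> Pm_const n d * I powr (- \<delta>)"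
    proof -
      have "I * I ^ n \<le> I ^ d"
        using 3 I1 power_increasing[of "Suc n" d I] by simp
      then have "I ^ n / I ^ d \<le> 1 / I"
        using I0 by (simp add: divide_simps mult.commute)
      also have "1 / I = I powr (- 1)"
        using I0 by (simp add: powr_minus_divide)
      also have "\<dots> \<le> I powr (- \<delta>)"
        using I1 assms(2) by (intro powr_mono) simp_all
      finally show ?thesis
        using Pm_const_nonneg[of n d] mult_left_mono by fastforce
    qed
    finally show ?thesis using 3 unfolding I_def by simp
  qed
qed

lemma abs_Pm_monomial_Hm_le:
  assumes I: "Ifun k s \<ge> 1"
  shows "\<bar>Pm k s n (\<lambda>y. y ^ d * Hm k m y s)\<bar> \<le> (\<Sum>l = 0..m div 2. hermite_coeff m l * Pm_const n (m - 2 * l + d))"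
proof -
  let ?a = "- (1 / (Ifun k s)\<^sup>2)"
  have "(\<lambda>y. y ^ d * Hm k m y s) = (\<lambda>y. \<Sum>l = 0..m div 2. (hermite_coeff m l * ?a ^ l) * y ^ (m - 2 * l + d))"
    unfolding Hm_eq_hermite hermite_def sum_distrib_left by (intro ext sum.cong refl) (simp only: power_add mult_ac)
  then have "Pm k s n (\<lambda>y. y ^ d * Hm k m y s) = (\<Sum>l = 0..m div 2. (hermite_coeff m l * ?a ^ l) * Pm k s n (\<lambda>y. y ^ (m - 2 * l + d)))"
    by (simp add: Pm_sum Pm_cmult poly_bounded_cmult poly_bounded_monomial_Ifun)
  also have "\<bar>\<dots>\<bar> \<le> (\<Sum>l = 0..m div 2. hermite_coeff m l * Pm_const n (m - 2 * l + d))"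
  proof (rule order_trans[OF sum_abs sum_mono])
    fix l
    have "\<bar>?a ^ l\<bar> * \<bar>Pm k s n (\<lambda>y. y ^ (m - 2 * l + d))\<bar> \<le> 1 * Pm_const n (m - 2 * l + d)"
      using I by (intro mult_mono abs_Pm_monomial_le) (simp_all add: power_abs power_le_one_iff)
    then show "\<bar>hermite_coeff m l * ?a ^ l * Pm k s n (\<lambda>y. y ^ (m - 2 * l + d))\<bar> \<le> hermite_coeff m l * Pm_const n (m - 2 * l + d)"
      unfolding abs_mult abs_of_nonneg[OF hermite_coeff_nonneg] mult.assoc
      by (intro mult_left_mono hermite_coeff_nonneg) simp
  qed
  finally show ?thesis .
qed

section \<open>The factor e_b\<close>

lemma inverse_add_expansion:
  fixes c x :: "'a :: field"
  assumes c: "c \<noteq> 0" and cx: "c + x \<noteq> 0"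
  shows "1 / (c + x) = (\<Sum>j<J. (- x) ^ j / c ^ Suc j) + (- x / c) ^ J / (c + x)"
proof (induction J)
  case (Suc J)
  have split: "z / (c + x) = z / c + z * (- x / c) / (c + x)" for z
  proof -
    have "z * (- x / c) / (c + x) = z / (c + x) - z / c"
      using c cx by (simp add: divide_simps) (simp add: algebra_simps)
    then show ?thesis by simp
  qed
  have "(- x / c) ^ J / c = (- x) ^ J / c ^ Suc J"
    unfolding power_divide by (simp add: mult.commute)
  then show ?case
    using Suc.IH split[of "(- x / c) ^ J"] by simp
qed simp

lemma e_b_measurable [measurable]: "e_b p k b \<in> borel_measurable borel"
  unfolding e_b_def by measurable

lemma e_b_denominator_pos: "p > 1 \<Longrightarrow> b > 0 \<Longrightarrow> p - 1 + b * (y :: real) ^ (2 * k) > 0"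
  by (simp add: add_pos_nonneg power_mult)

lemma monomial_e_b_bounds:
  assumes "p > 1" "b > 0"
  shows "0 \<le> y ^ (2 * k) * e_b p k b y" "y ^ (2 * k) * e_b p k b y \<le> 1 / b"
proof -
  have D: "p - 1 + b * y ^ (2 * k) > 0" by (rule e_b_denominator_pos[OF assms])
  have t: "y ^ (2 * k) \<ge> 0" by (simp add: power_mult)
  show "0 \<le> y ^ (2 * k) * e_b p k b y" unfolding e_b_def using D t by simp
  show "y ^ (2 * k) * e_b p k b y \<le> 1 / b"
    unfolding e_b_def using D t assms by (simp add: divide_simps)
qed

lemma monomial_e_b_expansion:
  assumes "p > 1" "b > 0"
  shows "y ^ (2 * k) * e_b p k b y = (\<Sum>j<J. (- b) ^ j / (p - 1) ^ Suc j * y ^ (2 * k * Suc j))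
    + (- b / (p - 1)) ^ J * y ^ (2 * k * J) * (y ^ (2 * k) * e_b p k b y)"
proof -
  define t where "t = y ^ (2 * k)"
  have t_pow: "y ^ (2 * k * j) = t ^ j" for j unfolding t_def by (simp add: power_mult)
  define D where "D = p - 1 + b * t"
  have D: "D > 0" unfolding D_def t_def by (rule e_b_denominator_pos[OF assms])
  have "1 / D = (\<Sum>j<J. (- (b * t)) ^ j / (p - 1) ^ Suc j) + (- (b * t) / (p - 1)) ^ J / D"
    unfolding D_def using assms D by (intro inverse_add_expansion) (simp_all add: D_def)
  then have "t * (1 / D) = t * ((\<Sum>j<J. (- (b * t)) ^ j / (p - 1) ^ Suc j) + (- (b * t) / (p - 1)) ^ J / D)"
    by (rule arg_cong)
  also have "\<dots> = (\<Sum>j<J. (- b) ^ j / (p - 1) ^ Suc j * t ^ Suc j) + (- b / (p - 1)) ^ J * t ^ J * (t * (1 / D))"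
  proof -
    have "(- (b * t)) ^ j = (- b) ^ j * t ^ j" for j
      by (metis mult_minus_left power_mult_distrib)
    moreover have "(- (b * t / (p - 1))) ^ J = t ^ J * (- (b / (p - 1))) ^ J"
      by (metis mult.commute minus_mult_left power_mult_distrib times_divide_eq_right)
    ultimately show ?thesis
      by (simp add: distrib_left sum_distrib_left mult_ac)
  qed
  finally show ?thesis
    unfolding e_b_def t_pow t_def[symmetric] D_def[symmetric] .
qed

lemma poly_bounded_monomial_e_b:
  assumes "p > 1" "b > 0"
  shows "poly_bounded I (\<lambda>y. y ^ (2 * k) * e_b p k b y)"
proof (rule poly_bounded_bounded)
  show "(\<lambda>y. y ^ (2 * k) * e_b p k b y) \<in> borel_measurable borel" by measurable
  show "\<bar>y ^ (2 * k) * e_b p k b y\<bar> \<le> 1 / b" for y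
    using monomial_e_b_bounds[OF assms, of y k] by simp
qed

lemma abs_Hm_le:
  assumes "Ifun k s \<ge> 1"
  shows "\<bar>Hm k m y s\<bar> \<le> hermite_coeff_sum m * (1 + (Ifun k s * y)\<^sup>2) ^ m"
proof -
  have "\<bar>Hm k m y s\<bar> \<le> hermite_coeff_sum m * (1 + (Ifun k s * y)\<^sup>2) ^ m / Ifun k s ^ m"
    unfolding Hm_eq_hermite by (rule abs_hermite_le[OF Ifun_pos])
  also have "\<dots> \<le> hermite_coeff_sum m * (1 + (Ifun k s * y)\<^sup>2) ^ m / 1"
    using assms hermite_coeff_sum_nonneg[of m] by (intro divide_left_mono one_le_power) simp_all
  also have "\<dots> = hermite_coeff_sum m * (1 + (Ifun k s * y)\<^sup>2) ^ m"
    by simp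
  finally show ?thesis .
qed

lemma abs_monomial_e_b_le:
  assumes p: "p > 1" and b0: "b0 > 0" and b: "b0 / 2 \<le> b"
  shows "\<bar>y ^ (2 * k) * e_b p k b y\<bar> \<le> 2 / b0"
proof -
  have "b > 0" using b b0 by simp
  moreover have "1 / b \<le> 2 / b0"
    using b b0 by (simp add: divide_simps)
  ultimately show ?thesis
    using monomial_e_b_bounds[OF p, of b y k] by simp
qed

lemma Pm_e_b_Hm_expansion:
  assumes p: "p > 1" and b: "b > 0"
  shows "Pm k s n (\<lambda>y. y ^ (2 * k) * e_b p k b y * Hm k m y s)
    = (\<Sum>j<n. (- b) ^ j / (p - 1) ^ Suc j * Pm k s n (\<lambda>y. y ^ (2 * k * Suc j) * Hm k m y s))
      + (- b / (p - 1)) ^ n * Pm k s n (\<lambda>y. y ^ (2 * k * n) * (y ^ (2 * k) * e_b p k b y) * Hm k m y s)"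
proof -
  let ?E = "\<lambda>y. y ^ (2 * k) * e_b p k b y"
  let ?c = "\<lambda>j. (- b) ^ j / (p - 1) ^ Suc j"
  let ?r = "(- b / (p - 1)) ^ n"
  have pointwise: "?E y * Hm k m y s = (\<Sum>j<n. ?c j * (y ^ (2 * k * Suc j) * Hm k m y s)) + ?r * (y ^ (2 * k * n) * ?E y * Hm k m y s)" for y
  proof -
    have "?E y * Hm k m y s = ((\<Sum>j<n. ?c j * y ^ (2 * k * Suc j)) + ?r * y ^ (2 * k * n) * ?E y) * Hm k m y s"
      by (simp only: monomial_e_b_expansion[OF p b, of y k n, symmetric])
    then show ?thesis
      by (simp only: distrib_right sum_distrib_right mult.assoc)
  qed
  have terms: "poly_bounded (Ifun k s) (\<lambda>y. ?c j * (y ^ (2 * k * Suc j) * Hm k m y s))" for j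
    by (intro poly_bounded_cmult poly_bounded_mult poly_bounded_monomial_Ifun poly_bounded_Hm)
  have rest: "poly_bounded (Ifun k s) (\<lambda>y. y ^ (2 * k * n) * ?E y * Hm k m y s)"
    by (intro poly_bounded_mult poly_bounded_monomial_Ifun poly_bounded_monomial_e_b p b poly_bounded_Hm)
  have sum: "poly_bounded (Ifun k s) (\<lambda>y. \<Sum>j<n. ?c j * (y ^ (2 * k * Suc j) * Hm k m y s))"
    by (rule poly_bounded_sum) (rule finite_lessThan, rule terms)
  show ?thesis
    unfolding pointwise Pm_add[OF sum poly_bounded_cmult[OF rest]] Pm_cmult[symmetric]
    by (simp only: Pm_sum[OF finite_lessThan terms])
qed

lemma abs_Pm_e_b_Hm_remainder_le:
  assumes p: "p > 1" and k: "k \<ge> 1" and b0: "b0 > 0" and b: "b0 / 2 \<le> b" and I: "Ifun k s \<ge> 1"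
  shows "\<bar>Pm k s n (\<lambda>y. y ^ (2 * k * n) * (y ^ (2 * k) * e_b p k b y) * Hm k m y s)\<bar>
    \<le> Pm_const n (m + 2 * k * n) * (2 / b0 * hermite_coeff_sum m)"
proof -
  have "\<bar>y ^ (2 * k * n) * (y ^ (2 * k) * e_b p k b y) * Hm k m y s\<bar>
      \<le> (2 / b0 * hermite_coeff_sum m) * \<bar>y\<bar> ^ (2 * k * n) * (1 + (Ifun k s * y)\<^sup>2) ^ m" for y
  proof -
    have "\<bar>y ^ (2 * k) * e_b p k b y\<bar> * \<bar>Hm k m y s\<bar> \<le> 2 / b0 * (hermite_coeff_sum m * (1 + (Ifun k s * y)\<^sup>2) ^ m)"
      using abs_monomial_e_b_le[OF p b0 b] abs_Hm_le[OF I, of m y] b0 by (intro mult_mono) simp_all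
    then have "\<bar>y\<bar> ^ (2 * k * n) * (\<bar>y ^ (2 * k) * e_b p k b y\<bar> * \<bar>Hm k m y s\<bar>)
        \<le> \<bar>y\<bar> ^ (2 * k * n) * (2 / b0 * (hermite_coeff_sum m * (1 + (Ifun k s * y)\<^sup>2) ^ m))"
      by (rule mult_left_mono) simp
    then show ?thesis
      by (simp add: abs_mult power_abs mult_ac)
  qed
  then have "\<bar>Pm k s n (\<lambda>y. y ^ (2 * k * n) * (y ^ (2 * k) * e_b p k b y) * Hm k m y s)\<bar>
      \<le> Pm_const n (m + 2 * k * n) * (2 / b0 * hermite_coeff_sum m) * Ifun k s ^ n / Ifun k s ^ (2 * k * n)"
    using b0 hermite_coeff_sum_nonneg[of m] by (intro abs_Pm_le_vanishing) simp_all
  also have "\<dots> \<le> Pm_const n (m + 2 * k * n) * (2 / b0 * hermite_coeff_sum m)"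
    using I k b0 Pm_const_nonneg hermite_coeff_sum_nonneg[of m]
    by (intro mult_divide_le_self power_increasing) simp_all
  finally show ?thesis .
qed

(* The size of E H_m alone only gives O(I^(n-m)).  Expanding e_b geometrically to order n leaves
   monomials times H_m, whose projections are O(1), and a remainder vanishing to order 2kn \<ge> n. *)
lemma Pm_e_b_Hm_bounded:
  assumes p: "p > 1" and k: "k \<ge> 1" and b0: "b0 > 0"
  obtains C where "C \<ge> 0" and "\<And>s b. Ifun k s \<ge> 1 \<Longrightarrow> b0 / 2 \<le> b \<Longrightarrow> b \<le> 2 * b0 \<Longrightarrow>
    \<bar>Pm k s n (\<lambda>y. y ^ (2 * k) * e_b p k b y * Hm k m y s)\<bar> \<le> C"
proof
  define K where "K d = (\<Sum>l = 0..m div 2. hermite_coeff m l * Pm_const n (m - 2 * l + d))" for d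
  define R where "R = Pm_const n (m + 2 * k * n) * (2 / b0 * hermite_coeff_sum m)"
  show "0 \<le> (\<Sum>j<n. (2 * b0) ^ j / (p - 1) ^ Suc j * K (2 * k * Suc j)) + (2 * b0 / (p - 1)) ^ n * R"
    unfolding K_def R_def using p b0
    by (intro add_nonneg_nonneg sum_nonneg mult_nonneg_nonneg divide_nonneg_nonneg hermite_coeff_nonneg
        Pm_const_nonneg hermite_coeff_sum_nonneg) simp_all
  fix s b assume I: "Ifun k s \<ge> 1" and b: "b0 / 2 \<le> b" "b \<le> 2 * b0"
  have b_pos: "b > 0" using b b0 by simp
  have coeff: "\<bar>(- b) ^ j / (p - 1) ^ Suc j\<bar> \<le> (2 * b0) ^ j / (p - 1) ^ Suc j" for j
  proof -
    have "\<bar>(- b) ^ j / (p - 1) ^ Suc j\<bar> = b ^ j / (p - 1) ^ Suc j"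
      using p b_pos by (simp add: power_abs abs_divide)
    also have "\<dots> \<le> (2 * b0) ^ j / (p - 1) ^ Suc j"
      using p b b_pos by (intro divide_right_mono power_mono) simp_all
    finally show ?thesis .
  qed
  have ratio: "\<bar>(- b / (p - 1)) ^ n\<bar> \<le> (2 * b0 / (p - 1)) ^ n"
  proof -
    have "\<bar>(- b / (p - 1)) ^ n\<bar> = (b / (p - 1)) ^ n"
      using p b_pos by (simp add: power_abs abs_divide)
    also have "\<dots> \<le> (2 * b0 / (p - 1)) ^ n"
      using p b b_pos by (intro divide_right_mono power_mono) simp_all
    finally show ?thesis .
  qed
  have "\<bar>(- b) ^ j / (p - 1) ^ Suc j * Pm k s n (\<lambda>y. y ^ (2 * k * Suc j) * Hm k m y s)\<bar>
      \<le> (2 * b0) ^ j / (p - 1) ^ Suc j * K (2 * k * Suc j)" for j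
    unfolding abs_mult K_def using coeff abs_Pm_monomial_Hm_le[OF I] p b0 by (intro mult_mono) simp_all
  moreover have "\<bar>(- b / (p - 1)) ^ n * Pm k s n (\<lambda>y. y ^ (2 * k * n) * (y ^ (2 * k) * e_b p k b y) * Hm k m y s)\<bar>
      \<le> (2 * b0 / (p - 1)) ^ n * R"
    unfolding abs_mult R_def using ratio abs_Pm_e_b_Hm_remainder_le[OF p k b0 b(1) I] Pm_const_nonneg
    by (intro mult_mono) simp_all
  ultimately show "\<bar>Pm k s n (\<lambda>y. y ^ (2 * k) * e_b p k b y * Hm k m y s)\<bar>
      \<le> (\<Sum>j<n. (2 * b0) ^ j / (p - 1) ^ Suc j * K (2 * k * Suc j)) + (2 * b0 / (p - 1)) ^ n * R"
    unfolding Pm_e_b_Hm_expansion[OF p b_pos]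
    by (intro order_trans[OF abs_triangle_ineq add_mono] order_trans[OF sum_abs sum_mono])
qed

section \<open>Projections of M(q)\<close>

lemma Mexp_gt: "p > 1 \<Longrightarrow> k \<ge> 1 \<Longrightarrow> Mexp p k > 2 * real k"
  unfolding Mexp_def by (simp add: divide_simps)

lemma brM_lt_Mexp:
  assumes "p > 1" "k \<ge> 1" "n \<le> brM p k" shows "real n < Mexp p k"
  using assms Mexp_gt[OF assms(1,2)] unfolding brM_def by linarith

lemma two_k_le_brM:
  assumes "p > 1" "k \<ge> 1" shows "2 * k \<le> brM p k"
  using Mexp_gt[OF assms] unfolding brM_def by linarith

lemma abs_powr_le_one_plus_square_power:
  assumes "0 \<le> M" "M \<le> 2 * real N"
  shows "\<bar>u :: real\<bar> powr M \<le> (1 + u\<^sup>2) ^ N"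
proof (cases "\<bar>u\<bar> \<le> 1")
  case True
  then have "\<bar>u\<bar> powr M \<le> 1"
    using assms by (intro powr_le1) simp_all
  then show ?thesis
    by (simp add: one_le_power order_trans)
next
  case False
  have "\<bar>u\<bar> powr M \<le> \<bar>u\<bar> powr (2 * real N)"
    using False assms by (intro powr_mono) simp_all
  also have "\<dots> = \<bar>u\<bar> ^ (2 * N)"
    using False by (subst powr_realpow[symmetric]) simp_all
  also have "\<dots> = (u\<^sup>2) ^ N"
    by (simp add: power_mult power2_abs)
  also have "\<dots> \<le> (1 + u\<^sup>2) ^ N"
    by (intro power_mono) simp_all
  finally show ?thesis .
qed

lemma one_plus_powr_le:
  fixes I M :: real
  assumes "I \<ge> 1" "0 \<le> M"
  shows "1 + \<bar>y\<bar> powr M \<le> 2 * (1 + (I * y)\<^sup>2) ^ nat \<lceil>M\<rceil>"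
proof -
  have "\<bar>y\<bar> powr M \<le> \<bar>I * y\<bar> powr M"
    using assms by (intro powr_mono2) (simp_all add: abs_mult mult_le_cancel_right1)
  also have "\<dots> \<le> (1 + (I * y)\<^sup>2) ^ nat \<lceil>M\<rceil>"
    using assms(2) by (intro abs_powr_le_one_plus_square_power) linarith+
  moreover have "1 \<le> (1 + (I * y)\<^sup>2) ^ nat \<lceil>M\<rceil>"
    by (simp add: one_le_power)
  ultimately show ?thesis by linarith
qed

lemma poly_bounded_powr_growth:
  assumes I: "I \<ge> 1" and M: "0 \<le> M" and f: "f \<in> borel_measurable borel"
    and bound: "\<And>y. \<bar>f y\<bar> \<le> B * (1 + \<bar>y\<bar> powr M)"
  shows "poly_bounded I f"
proof -
  have B: "B \<ge> 0"
    using bound[of 0] abs_ge_zero[of "f 0"] by simp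
  have "\<bar>f y\<bar> \<le> (2 * B) * (1 + (I * y)\<^sup>2) ^ nat \<lceil>M\<rceil>" for y
  proof -
    have "\<bar>f y\<bar> \<le> B * (2 * (1 + (I * y)\<^sup>2) ^ nat \<lceil>M\<rceil>)"
      by (rule order_trans[OF bound mult_left_mono[OF one_plus_powr_le[OF I M] B]])
    then show ?thesis by (simp add: mult_ac)
  qed
  then show ?thesis
    unfolding poly_bounded_def using f by blast
qed

lemma abs_le_of_snorm_le:
  assumes "snorm p k s g \<le> ereal c"
  shows "\<bar>g y\<bar> \<le> c * (Ifun k s powr (- Mexp p k) + \<bar>y\<bar> powr Mexp p k)"
proof -
  have "\<bar>g y\<bar> / (Ifun k s powr (- Mexp p k) + \<bar>y\<bar> powr Mexp p k) \<le> c"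
    using assms unfolding snorm_def SUP_le_iff by simp
  moreover have "Ifun k s powr (- Mexp p k) + \<bar>y\<bar> powr Mexp p k > 0"
    using Ifun_pos[of k s] by (simp add: add_pos_nonneg)
  ultimately show ?thesis
    by (simp add: divide_le_eq mult.commute)
qed

lemma snorm_le_imp_nonneg:
  assumes "snorm p k s g \<le> ereal c" shows "c \<ge> 0"
proof -
  have "0 \<le> c * (Ifun k s powr (- Mexp p k) + \<bar>0 :: real\<bar> powr Mexp p k)"
    using abs_le_of_snorm_le[OF assms, of 0] by (rule order_trans[OF abs_ge_zero])
  then show ?thesis
    using Ifun_pos[of k s] by (simp add: zero_le_mult_iff)
qed

lemma abs_le_of_snorm_le_scaled:
  assumes M: "Mexp p k \<ge> 0" and g: "snorm p k s g \<le> ereal c"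
  shows "\<bar>g y\<bar> \<le> (2 * c * Ifun k s powr (- Mexp p k)) * (1 + (Ifun k s * y)\<^sup>2) ^ nat \<lceil>Mexp p k\<rceil>"
proof -
  define I where "I = Ifun k s"
  define M where "M = Mexp p k"
  have I: "I > 0" unfolding I_def by (rule Ifun_pos)
  have "I powr (- M) + \<bar>y\<bar> powr M = I powr (- M) * (1 + \<bar>I * y\<bar> powr M)"
  proof -
    have "\<bar>I * y\<bar> powr M = I powr M * \<bar>y\<bar> powr M"
      using I by (simp add: abs_mult powr_mult)
    moreover have "I powr (- M) * I powr M = 1"
      using I by (simp add: powr_add[symmetric])
    ultimately show ?thesis
      by (simp add: distrib_left mult.assoc[symmetric])
  qed
  then have "\<bar>g y\<bar> \<le> c * (I powr (- M) * (1 + \<bar>I * y\<bar> powr M))"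
    using abs_le_of_snorm_le[OF g, of y] unfolding I_def[symmetric] M_def[symmetric] by simp
  also have "\<dots> \<le> c * (I powr (- M) * (2 * (1 + (I * y)\<^sup>2) ^ nat \<lceil>M\<rceil>))"
    using one_plus_powr_le[OF order_refl, of M "I * y"] M snorm_le_imp_nonneg[OF g]
    unfolding M_def by (intro mult_left_mono) simp_all
  finally show ?thesis
    unfolding I_def M_def by (simp add: mult_ac)
qed

lemma abs_Pm_mult_le_of_snorm:
  assumes p: "p > 1" and k: "k \<ge> 1" and I: "Ifun k s \<ge> 1" and n: "real n < Mexp p k"
    and g: "snorm p k s g \<le> ereal c" and h: "\<And>y. \<bar>h y\<bar> \<le> H" and H: "H \<ge> 0"
  shows "\<bar>Pm k s n (\<lambda>y. h y * g y)\<bar> \<le> Pm_const n (nat \<lceil>Mexp p k\<rceil>) * (2 * H * c)"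
proof -
  define I where "I = Ifun k s"
  define M where "M = Mexp p k"
  have I0: "I > 0" and I1: "I \<ge> 1" using I unfolding I_def by simp_all
  have M: "M \<ge> 0" using Mexp_gt[OF p k] unfolding M_def by simp
  have c: "c \<ge> 0" by (rule snorm_le_imp_nonneg[OF g])
  have "\<bar>h y * g y\<bar> \<le> H * (2 * c * I powr (- M) * (1 + (I * y)\<^sup>2) ^ nat \<lceil>M\<rceil>)" for y
    unfolding abs_mult using h[of y] abs_le_of_snorm_le_scaled[OF _ g, of y] M H
    unfolding I_def M_def by (intro mult_mono) simp_all
  then have "\<bar>Pm k s n (\<lambda>y. h y * g y)\<bar> \<le> Pm_const n (nat \<lceil>M\<rceil>) * (2 * H * c * I powr (- M)) * I ^ n"
    unfolding I_def by (intro abs_Pm_le) (simp add: mult_ac)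
  also have "\<dots> = Pm_const n (nat \<lceil>M\<rceil>) * (2 * H * c) * I powr (real n - M)"
  proof -
    have "I ^ n = I powr real n"
      using I0 by (simp add: powr_realpow)
    then have "I powr (- M) * I ^ n = I powr (real n - M)"
      by (simp add: powr_add[symmetric])
    then show ?thesis by (simp add: mult_ac)
  qed
  also have "\<dots> \<le> Pm_const n (nat \<lceil>M\<rceil>) * (2 * H * c) * I powr 0"
    using I1 n Pm_const_nonneg H c unfolding M_def
    by (intro mult_left_mono powr_mono) simp_all
  finally show ?thesis unfolding M_def using I0 by simp
qed

lemma inV_coeff_le:
  assumes I: "Ifun k s \<ge> 1" and \<delta>: "\<delta> \<ge> 0" and V: "inV p k \<delta> b0 s q b" and m: "m \<le> brM p k"
  shows "\<bar>Pm k s m q\<bar> \<le> Ifun k s powr (- \<delta>)"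
proof (cases "m = 2 * k")
  case True
  have "Ifun k s powr (- 2 * \<delta>) \<le> Ifun k s powr (- \<delta>)"
    using I \<delta> by (intro powr_mono) simp_all
  then show ?thesis using V True unfolding inV_def by auto
next
  case False
  then show ?thesis using V m unfolding inV_def by auto
qed

lemma Pm_Mq_decomposition:
  assumes p: "p > 1" and b: "b > 0" and q: "poly_bounded (Ifun k s) q"
  shows "Pm k s n (Mq p k b q) = p / (p - 1) * (Pm k s n (\<lambda>y. y ^ (2 * k))
    + (\<Sum>m = 0..brM p k. Pm k s m q * Pm k s n (\<lambda>y. y ^ (2 * k) * e_b p k b y * Hm k m y s))
    + Pm k s n (\<lambda>y. y ^ (2 * k) * e_b p k b y * q_minus p k s q y))"
proof -
  let ?E = "\<lambda>y. y ^ (2 * k) * e_b p k b y"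
  let ?S = "\<lambda>y. \<Sum>m = 0..brM p k. Pm k s m q * (?E y * Hm k m y s)"
  have E: "poly_bounded (Ifun k s) ?E"
    by (rule poly_bounded_monomial_e_b[OF p b])
  have EH: "poly_bounded (Ifun k s) (\<lambda>y. Pm k s m q * (?E y * Hm k m y s))" for m
    by (intro poly_bounded_cmult poly_bounded_mult E poly_bounded_Hm)
  have S: "poly_bounded (Ifun k s) ?S"
    by (rule poly_bounded_sum) (rule finite_atLeastAtMost, rule EH)
  have "poly_bounded (Ifun k s) (\<lambda>y. \<Sum>m = 0..brM p k. Pm k s m q * Hm k m y s)"
    by (intro poly_bounded_sum poly_bounded_cmult poly_bounded_Hm finite_atLeastAtMost)
  then have Eq: "poly_bounded (Ifun k s) (\<lambda>y. ?E y * q_minus p k s q y)"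
    unfolding q_minus_def by (intro poly_bounded_mult E poly_bounded_diff q)
  have "Mq p k b q = (\<lambda>y. p / (p - 1) * (y ^ (2 * k) + (?S y + ?E y * q_minus p k s q y)))"
    unfolding Mq_def q_minus_def
    by (auto simp: sum_distrib_left algebra_simps add_divide_distrib)
  then have "Pm k s n (Mq p k b q) = p / (p - 1) * (Pm k s n (\<lambda>y. y ^ (2 * k)) + (Pm k s n ?S + Pm k s n (\<lambda>y. ?E y * q_minus p k s q y)))"
    by (simp only: Pm_cmult Pm_add[OF poly_bounded_monomial_Ifun poly_bounded_add[OF S Eq]] Pm_add[OF S Eq])
  also have "Pm k s n ?S = (\<Sum>m = 0..brM p k. Pm k s m q * Pm k s n (\<lambda>y. ?E y * Hm k m y s))"
    by (simp only: Pm_sum[OF finite_atLeastAtMost EH] Pm_cmult)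
  finally show ?thesis
    by (simp only: add.assoc)
qed

lemma poly_bounded_of_inV:
  assumes p: "p > 1" and k: "k \<ge> 1" and I: "Ifun k s \<ge> 1" and V: "inV p k \<delta> b0 s q b"
  shows "poly_bounded (Ifun k s) q"
proof -
  obtain B where "\<And>y. \<bar>q y\<bar> \<le> B * (1 + \<bar>y\<bar> powr Mexp p k)"
    using V unfolding inV_def by blast
  moreover have "q \<in> borel_measurable borel" "0 \<le> Mexp p k"
    using V Mexp_gt[OF p k] unfolding inV_def by simp_all
  ultimately show ?thesis
    by (intro poly_bounded_powr_growth[OF I])
qed

lemma abs_Pm_e_b_q_minus_le:
  assumes p: "p > 1" and k: "k \<ge> 1" and b0: "b0 > 0" and I: "Ifun k s \<ge> 1"
    and V: "inV p k \<delta> b0 s q b" and n: "n \<le> brM p k"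
  shows "\<bar>Pm k s n (\<lambda>y. y ^ (2 * k) * e_b p k b y * q_minus p k s q y)\<bar>
    \<le> Pm_const n (nat \<lceil>Mexp p k\<rceil>) * (4 / b0) * Ifun k s powr (- \<delta>)"
proof -
  have "\<bar>y ^ (2 * k) * e_b p k b y\<bar> \<le> 2 / b0" for y
    using V unfolding inV_def by (intro abs_monomial_e_b_le[OF p b0]) simp
  moreover have "snorm p k s (q_minus p k s q) \<le> ereal (Ifun k s powr (- \<delta>))"
    using V unfolding inV_def by blast
  ultimately have "\<bar>Pm k s n (\<lambda>y. y ^ (2 * k) * e_b p k b y * q_minus p k s q y)\<bar>
      \<le> Pm_const n (nat \<lceil>Mexp p k\<rceil>) * (2 * (2 / b0) * Ifun k s powr (- \<delta>))"
    using b0 by (intro abs_Pm_mult_le_of_snorm[OF p k I brM_lt_Mexp[OF p k n]]) simp_all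
  then show ?thesis
    by (simp add: mult_ac)
qed

lemma abs_Pm_Mq_sub_le_sum:
  assumes p: "p > 1" and k: "k \<ge> 1" and b0: "b0 > 0" and \<delta>: "0 \<le> \<delta>" "\<delta> \<le> 1"
    and I: "Ifun k s \<ge> 1" and V: "inV p k \<delta> b0 s q b" and n: "n \<le> brM p k"
    and K: "\<And>m. m \<le> brM p k \<Longrightarrow> \<bar>Pm k s n (\<lambda>y. y ^ (2 * k) * e_b p k b y * Hm k m y s)\<bar> \<le> K m"
  shows "\<bar>Pm k s n (Mq p k b q) - (if n = 2 * k then p / (p - 1) else 0)\<bar>
    \<le> p / (p - 1) * (Pm_const n (2 * k) + (\<Sum>m = 0..brM p k. K m) + Pm_const n (nat \<lceil>Mexp p k\<rceil>) * (4 / b0))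
      * Ifun k s powr (- \<delta>)"
proof -
  let ?I = "Ifun k s powr (- \<delta>)"
  let ?R = "brM p k"
  have b_pos: "b > 0"
    using V b0 unfolding inV_def by auto
  have split: "Pm k s n (Mq p k b q) - (if n = 2 * k then p / (p - 1) else 0) = p / (p - 1) *
      ((Pm k s n (\<lambda>y. y ^ (2 * k)) - (if n = 2 * k then 1 else 0))
      + (\<Sum>m = 0..?R. Pm k s m q * Pm k s n (\<lambda>y. y ^ (2 * k) * e_b p k b y * Hm k m y s))
      + Pm k s n (\<lambda>y. y ^ (2 * k) * e_b p k b y * q_minus p k s q y))"
    unfolding Pm_Mq_decomposition[OF p b_pos poly_bounded_of_inV[OF p k I V]]
    by (cases "n = 2 * k") (simp_all add: algebra_simps)
  have A: "\<bar>Pm k s n (\<lambda>y. y ^ (2 * k)) - (if n = 2 * k then 1 else 0)\<bar> \<le> Pm_const n (2 * k) * ?I"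
    by (rule abs_Pm_monomial_sub_le[OF I \<delta>(2)])
  have "\<bar>Pm k s m q * Pm k s n (\<lambda>y. y ^ (2 * k) * e_b p k b y * Hm k m y s)\<bar> \<le> ?I * K m" if "m \<in> {0..?R}" for m
    using that inV_coeff_le[OF I \<delta>(1) V] K unfolding abs_mult by (intro mult_mono) auto
  then have "\<bar>\<Sum>m = 0..?R. Pm k s m q * Pm k s n (\<lambda>y. y ^ (2 * k) * e_b p k b y * Hm k m y s)\<bar> \<le> (\<Sum>m = 0..?R. ?I * K m)"
    by (intro order_trans[OF sum_abs sum_mono])
  then have S: "\<bar>\<Sum>m = 0..?R. Pm k s m q * Pm k s n (\<lambda>y. y ^ (2 * k) * e_b p k b y * Hm k m y s)\<bar> \<le> (\<Sum>m = 0..?R. K m) * ?I"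
    unfolding sum_distrib_right by (simp add: mult.commute)
  have F: "\<bar>Pm k s n (\<lambda>y. y ^ (2 * k) * e_b p k b y * q_minus p k s q y)\<bar> \<le> Pm_const n (nat \<lceil>Mexp p k\<rceil>) * (4 / b0) * ?I"
    by (rule abs_Pm_e_b_q_minus_le[OF p k b0 I V n])
  have P: "\<bar>p / (p - 1)\<bar> = p / (p - 1)"
    using p by simp
  have "\<bar>Pm k s n (Mq p k b q) - (if n = 2 * k then p / (p - 1) else 0)\<bar> \<le> p / (p - 1) *
      (Pm_const n (2 * k) * ?I + (\<Sum>m = 0..?R. K m) * ?I + Pm_const n (nat \<lceil>Mexp p k\<rceil>) * (4 / b0) * ?I)"
    unfolding split abs_mult P using p
    by (intro mult_left_mono order_trans[OF abs_triangle_ineq add_mono[OF order_trans[OF abs_triangle_ineq add_mono[OF A S]] F]])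
      simp_all
  then show ?thesis
    by (simp add: algebra_simps)
qed

lemma abs_Pm_Mq_sub_le_uniform:
  assumes p: "p > 1" and k: "k \<ge> 1" and b0: "b0 > 0" and \<delta>: "0 \<le> \<delta>" "\<delta> \<le> 1"
  obtains C where "C > 0" and "\<And>s q b n. Ifun k s \<ge> 1 \<Longrightarrow> inV p k \<delta> b0 s q b \<Longrightarrow> n \<le> brM p k \<Longrightarrow>
    \<bar>Pm k s n (Mq p k b q) - (if n = 2 * k then p / (p - 1) else 0)\<bar> \<le> C * Ifun k s powr (- \<delta>)"
proof -
  let ?R = "brM p k"
  have "\<forall>n m. \<exists>C \<ge> 0. \<forall>s b. Ifun k s \<ge> 1 \<longrightarrow> b0 / 2 \<le> b \<longrightarrow> b \<le> 2 * b0 \<longrightarrow>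
      \<bar>Pm k s n (\<lambda>y. y ^ (2 * k) * e_b p k b y * Hm k m y s)\<bar> \<le> C"
    using Pm_e_b_Hm_bounded[OF p k b0] by metis
  then obtain K where K0: "\<And>n m. K n m \<ge> 0" and K: "\<And>n m s b. Ifun k s \<ge> 1 \<Longrightarrow> b0 / 2 \<le> b \<Longrightarrow> b \<le> 2 * b0 \<Longrightarrow>
      \<bar>Pm k s n (\<lambda>y. y ^ (2 * k) * e_b p k b y * Hm k m y s)\<bar> \<le> K n m"
    by metis
  define D where "D n = p / (p - 1) * (Pm_const n (2 * k) + (\<Sum>m = 0..?R. K n m) + Pm_const n (nat \<lceil>Mexp p k\<rceil>) * (4 / b0))" for n
  have D0: "D n \<ge> 0" for n
    unfolding D_def using p b0 K0 by (intro mult_nonneg_nonneg add_nonneg_nonneg sum_nonneg Pm_const_nonneg) simp_all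
  show ?thesis
  proof (rule that)
    show "1 + (\<Sum>n = 0..?R. D n) > 0"
      using D0 by (simp add: add_pos_nonneg sum_nonneg)
    fix s q b n
    assume I: "Ifun k s \<ge> 1" and V: "inV p k \<delta> b0 s q b" and n: "n \<le> ?R"
    have "\<bar>Pm k s n (Mq p k b q) - (if n = 2 * k then p / (p - 1) else 0)\<bar> \<le> D n * Ifun k s powr (- \<delta>)"
      unfolding D_def using V unfolding inV_def
      by (intro abs_Pm_Mq_sub_le_sum[OF p k b0 \<delta> I V n] K[OF I]) simp_all
    also have "\<dots> \<le> (1 + (\<Sum>n = 0..?R. D n)) * Ifun k s powr (- \<delta>)"
      using member_le_sum[of n "{0..?R}" D] D0 n by (intro mult_right_mono) simp_all
    finally show "\<bar>Pm k s n (Mq p k b q) - (if n = 2 * k then p / (p - 1) else 0)\<bar> \<le> (1 + (\<Sum>n = 0..?R. D n)) * Ifun k s powr (- \<delta>)" .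
  qed
qed

theorem mainTheorem9:
  fixes p :: real and k :: nat and b0 :: real
  assumes "p > 1" and "k \<ge> 2" and "b0 > 0"
  shows "\<exists>\<delta>6 > 0. \<forall>\<delta>. 0 < \<delta> \<and> \<delta> < \<delta>6 \<longrightarrow>
    (\<exists>s6 \<ge> 1. \<exists>C > 0. \<forall>s0 \<ge> s6. \<forall>sbar. \<forall>(q :: real \<Rightarrow> real \<Rightarrow> real) (b :: real \<Rightarrow> real).
      (\<forall>s \<in> {s0..sbar}. inV p k \<delta> b0 s (q s) (b s)) \<longrightarrow>
      (\<forall>s \<in> {s0..sbar}.
         \<bar>Pm k s (2 * k) (Mq p k (b s) (q s)) - p / (p - 1)\<bar> \<le> C * Ifun k s powr (- \<delta>) \<and>
         (\<forall>n \<le> brM p k. n \<noteq> 2 * k \<longrightarrow>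
            \<bar>Pm k s n (Mq p k (b s) (q s))\<bar> \<le> C * Ifun k s powr (- \<delta>))))"
proof (rule exI[of _ 1], intro conjI allI impI)
  fix \<delta> :: real assume \<delta>: "0 < \<delta> \<and> \<delta> < 1"
  have p: "p > 1" and k: "k \<ge> 1" and b0: "b0 > 0" using assms by simp_all
  obtain C where C: "C > 0" and bound: "\<And>s q b n. Ifun k s \<ge> 1 \<Longrightarrow> inV p k \<delta> b0 s q b \<Longrightarrow> n \<le> brM p k \<Longrightarrow>
      \<bar>Pm k s n (Mq p k b q) - (if n = 2 * k then p / (p - 1) else 0)\<bar> \<le> C * Ifun k s powr (- \<delta>)"
    using abs_Pm_Mq_sub_le_uniform[OF p k b0, of \<delta>] \<delta> by auto
  show "\<exists>s6 \<ge> 1. \<exists>C > 0. \<forall>s0 \<ge> s6. \<forall>sbar q b. (\<forall>s \<in> {s0..sbar}. inV p k \<delta> b0 s (q s) (b s)) \<longrightarrow>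
      (\<forall>s \<in> {s0..sbar}. \<bar>Pm k s (2 * k) (Mq p k (b s) (q s)) - p / (p - 1)\<bar> \<le> C * Ifun k s powr (- \<delta>) \<and>
         (\<forall>n \<le> brM p k. n \<noteq> 2 * k \<longrightarrow> \<bar>Pm k s n (Mq p k (b s) (q s))\<bar> \<le> C * Ifun k s powr (- \<delta>)))"
  proof (rule exI[of _ 1], intro conjI exI[of _ C] allI impI ballI C order_refl)
    fix s0 sbar s and q :: "real \<Rightarrow> real \<Rightarrow> real" and b :: "real \<Rightarrow> real"
    assume "1 \<le> s0" and V: "\<forall>s \<in> {s0..sbar}. inV p k \<delta> b0 s (q s) (b s)" and s: "s \<in> {s0..sbar}"
    then have I: "Ifun k s \<ge> 1" and Vs: "inV p k \<delta> b0 s (q s) (b s)"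
      using k by (auto intro: Ifun_ge_1)
    show "\<bar>Pm k s (2 * k) (Mq p k (b s) (q s)) - p / (p - 1)\<bar> \<le> C * Ifun k s powr (- \<delta>)"
      using bound[OF I Vs two_k_le_brM[OF p k]] by simp
    show "\<bar>Pm k s n (Mq p k (b s) (q s))\<bar> \<le> C * Ifun k s powr (- \<delta>)" if "n \<le> brM p k" "n \<noteq> 2 * k" for n
      using bound[OF I Vs that(1)] that(2) by simp
  qed
qed simp

end
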